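(* Let $k$ be an algebraically closed field, grade by $\mathbb{Z}$, let $A=k[x]$ with $|x|=0$ and zero differential, and $B=k\langle\epsilon\rangle=k[\epsilon]/(\epsilon^2)$ with $|\epsilon|=1$ and zero differential (both DG-algebras with zero curvature). Let $X$ be the CDG $B$-$A$-bimodule $B\otimes A$ with the differential determined by $d(1\otimes1)=\epsilon\otimes x$. Then $X\otimes_AA\cong X$ regarded as a left CDG $B$-module is not cofibrant in $B\text{-}mod^{II}_{co}$ (even though $A$ is cofibrant in $A\text{-}mod^{II}_{co}$ and $X$ is cofibrant in $B\text{-}mod\text{-}A^{II}_{co}$). In particular $\otimes_A$ with target the projective GL model structure is not a Quillen bifunctor in general.
   Context: For a CDG-algebra $R$, $R\text{-}mod^{II}_{co}$ is the projective Guan–Lazarev model structure on CDG $R$-modules with closed morphisms: weak equivalences are $f$ such that $Hom_R(T,f)$ is a quasi-isomorphism for every CDG $R$-module $T$ whose underlying graded module is free of finite rank (with $Hom_R$ the complex of graded $R$-linear maps with differential $f\mapsto df-(-1)^{|f|}fd$); fibrations are surjections; cofibrations are maps with the left lifting property against trivial fibrations. A CDG $B$-$A$-bimodule is a CDG $B\otimes A^{op}$-module, and $B\text{-}mod\text{-}A^{II}_{co}$ is the corresponding projective GL model structure. *)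

theory Defs
  imports Main "HOL-Library.Function_Algebras" "HOL-Computational_Algebra.Polynomial"
begin

definition alg_closed :: "'k::field itself \<Rightarrow> bool" where
  "alg_closed _ \<longleftrightarrow> (\<forall>p::'k poly. degree p > 0 \<longrightarrow> (\<exists>x. poly p x = 0))"

definition sc :: "'k::field \<Rightarrow> ('a \<Rightarrow> 'k) \<Rightarrow> ('a \<Rightarrow> 'k)" where
  "sc c x = (\<lambda>u. c * x u)"

definition ksign :: "int \<Rightarrow> 'k::field" where
  "ksign p = (if even p then 1 else -1)"

definition subsp :: "('a \<Rightarrow> 'k::field) set \<Rightarrow> bool" where
  "subsp S \<longleftrightarrow> 0 \<in> S \<and> (\<forall>x\<in>S. \<forall>y\<in>S. x + y \<in> S) \<and> (\<forall>c. \<forall>x\<in>S. sc c x \<in> S)"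

definition linmap :: "('a \<Rightarrow> 'k::field) set \<Rightarrow> ('b \<Rightarrow> 'k) set \<Rightarrow> (('a \<Rightarrow> 'k) \<Rightarrow> ('b \<Rightarrow> 'k)) \<Rightarrow> bool" where
  "linmap S T f \<longleftrightarrow> (\<forall>x\<in>S. f x \<in> T) \<and> (\<forall>x\<in>S. \<forall>y\<in>S. f (x + y) = f x + f y)
     \<and> (\<forall>c. \<forall>x\<in>S. f (sc c x) = sc c (f x))"

text \<open>A graded module over B = k[eps]/(eps^2), |eps| = 1, with a differential, given degree-wise:
  car n is the degree-n component, eps n : M^n -> M^(n+1) the action of eps,
  dif n : M^n -> M^(n+1) the differential.\<close>
record ('a, 'k) cdgB =
  car :: "int \<Rightarrow> ('a \<Rightarrow> 'k) set"
  eps :: "int \<Rightarrow> ('a \<Rightarrow> 'k) \<Rightarrow> ('a \<Rightarrow> 'k)"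
  dif :: "int \<Rightarrow> ('a \<Rightarrow> 'k) \<Rightarrow> ('a \<Rightarrow> 'k)"

text \<open>CDG B-module (B has zero differential and zero curvature): eps^2 = 0, d^2 = 0,
  d(eps m) = d(eps) m + (-1)^|eps| eps d(m) = - eps d(m).\<close>
definition is_cdgB :: "('a, 'k::field) cdgB \<Rightarrow> bool" where
  "is_cdgB M \<longleftrightarrow>
     (\<forall>n. subsp (car M n)) \<and>
     (\<forall>n. linmap (car M n) (car M (n+1)) (eps M n)) \<and>
     (\<forall>n. linmap (car M n) (car M (n+1)) (dif M n)) \<and>
     (\<forall>n. \<forall>m\<in>car M n. eps M (n+1) (eps M n m) = 0) \<and>
     (\<forall>n. \<forall>m\<in>car M n. dif M (n+1) (dif M n m) = 0) \<and>
     (\<forall>n. \<forall>m\<in>car M n. dif M (n+1) (eps M n m) = - eps M (n+1) (dif M n m))"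

definition closed_morph :: "('a, 'k::field) cdgB \<Rightarrow> ('b, 'k) cdgB \<Rightarrow>
    (int \<Rightarrow> ('a \<Rightarrow> 'k) \<Rightarrow> ('b \<Rightarrow> 'k)) \<Rightarrow> bool" where
  "closed_morph M N f \<longleftrightarrow>
     (\<forall>n. linmap (car M n) (car N n) (f n)) \<and>
     (\<forall>n. \<forall>m\<in>car M n. f (n+1) (eps M n m) = eps N n (f n m)) \<and>
     (\<forall>n. \<forall>m\<in>car M n. f (n+1) (dif M n m) = dif N n (f n m))"

text \<open>Elements of degree p of the complex Hom_B(M,N): graded B-linear maps of degree p,
  g(r m) = (-1)^(|g||r|) r g(m).\<close>
definition homB :: "('a, 'k::field) cdgB \<Rightarrow> ('b, 'k) cdgB \<Rightarrow> int \<Rightarrow>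
    (int \<Rightarrow> ('a \<Rightarrow> 'k) \<Rightarrow> ('b \<Rightarrow> 'k)) \<Rightarrow> bool" where
  "homB M N p g \<longleftrightarrow>
     (\<forall>n. linmap (car M n) (car N (n+p)) (g n)) \<and>
     (\<forall>n. \<forall>m\<in>car M n. g (n+1) (eps M n m) = sc (ksign p) (eps N (n+p) (g n m)))"

definition homD :: "('a, 'k::field) cdgB \<Rightarrow> ('b, 'k) cdgB \<Rightarrow> int \<Rightarrow>
    (int \<Rightarrow> ('a \<Rightarrow> 'k) \<Rightarrow> ('b \<Rightarrow> 'k)) \<Rightarrow> (int \<Rightarrow> ('a \<Rightarrow> 'k) \<Rightarrow> ('b \<Rightarrow> 'k))" where
  "homD M N p g = (\<lambda>n m. dif N (n+p) (g n m) - sc (ksign p) (g (n+1) (dif M n m)))"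

definition heq :: "('a, 'k::field) cdgB \<Rightarrow> (int \<Rightarrow> ('a \<Rightarrow> 'k) \<Rightarrow> ('b \<Rightarrow> 'k)) \<Rightarrow>
    (int \<Rightarrow> ('a \<Rightarrow> 'k) \<Rightarrow> ('b \<Rightarrow> 'k)) \<Rightarrow> bool" where
  "heq M g h \<longleftrightarrow> (\<forall>n. \<forall>m\<in>car M n. g n m = h n m)"

text \<open>Hom_B(T,f) : Hom_B(T,M) -> Hom_B(T,N) is a quasi-isomorphism
  (the induced map on cohomology is bijective in every degree p).\<close>
definition homB_qiso :: "('t, 'k::field) cdgB \<Rightarrow> ('a, 'k) cdgB \<Rightarrow> ('b, 'k) cdgB \<Rightarrow>
    (int \<Rightarrow> ('a \<Rightarrow> 'k) \<Rightarrow> ('b \<Rightarrow> 'k)) \<Rightarrow> bool" where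
  "homB_qiso T M N f \<longleftrightarrow> (\<forall>p.
     (\<forall>z. homB T N p z \<and> heq T (homD T N p z) (\<lambda>_ _. 0) \<longrightarrow>
        (\<exists>z'. homB T M p z' \<and> heq T (homD T M p z') (\<lambda>_ _. 0) \<and>
           (\<exists>h. homB T N (p-1) h \<and>
              heq T (\<lambda>n t. f (n+p) (z' n t) - z n t) (homD T N (p-1) h)))) \<and>
     (\<forall>z'. homB T M p z' \<and> heq T (homD T M p z') (\<lambda>_ _. 0) \<and>
        (\<exists>h. homB T N (p-1) h \<and> heq T (\<lambda>n t. f (n+p) (z' n t)) (homD T N (p-1) h)) \<longrightarrow>
        (\<exists>h'. homB T M (p-1) h' \<and> heq T z' (homD T M (p-1) h'))))"

text \<open>The underlying graded B-module is free of finite rank r, on homogeneous generators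
  gen i of degree deg i: in each degree m, {gen i | deg i = m} together with
  {eps gen i | deg i + 1 = m} is a k-basis.\<close>
definition free_fin :: "('a, 'k::field) cdgB \<Rightarrow> bool" where
  "free_fin T \<longleftrightarrow> (\<exists>(r::nat) (deg::nat \<Rightarrow> int) (gen::nat \<Rightarrow> ('a \<Rightarrow> 'k)).
     let comb = (\<lambda>m a b. (\<Sum>i\<in>{i. i < r \<and> deg i = m}. sc (a i) (gen i)) +
                         (\<Sum>i\<in>{i. i < r \<and> deg i + 1 = m}. sc (b i) (eps T (deg i) (gen i))))
     in (\<forall>i<r. gen i \<in> car T (deg i)) \<and>
        (\<forall>m. \<forall>t\<in>car T m. \<exists>a b. t = comb m a b) \<and>
        (\<forall>m a b. comb m a b = 0 \<longrightarrow>
            (\<forall>i<r. (deg i = m \<longrightarrow> a i = 0) \<and> (deg i + 1 = m \<longrightarrow> b i = 0))))"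

text \<open>Weak equivalences of the projective GL model structure B-mod^II_co
  (test objects T taken with elements in the same ambient type as M).\<close>
definition weqB :: "('a, 'k::field) cdgB \<Rightarrow> ('b, 'k) cdgB \<Rightarrow>
    (int \<Rightarrow> ('a \<Rightarrow> 'k) \<Rightarrow> ('b \<Rightarrow> 'k)) \<Rightarrow> bool" where
  "weqB M N f \<longleftrightarrow> (\<forall>T::('a, 'k) cdgB. is_cdgB T \<and> free_fin T \<longrightarrow> homB_qiso T M N f)"

definition fibB :: "('a, 'k::field) cdgB \<Rightarrow> ('b, 'k) cdgB \<Rightarrow>
    (int \<Rightarrow> ('a \<Rightarrow> 'k) \<Rightarrow> ('b \<Rightarrow> 'k)) \<Rightarrow> bool" where
  "fibB M N f \<longleftrightarrow> (\<forall>n. f n ` car M n = car N n)"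

text \<open>Cofibrant objects: 0 -> X has the LLP against all trivial fibrations M -> N
  (with M, N CDG B-modules whose elements live in the ambient type 'a => 'k).\<close>
definition cofibrantB :: "('a, 'k::field) cdgB \<Rightarrow> bool" where
  "cofibrantB X \<longleftrightarrow>
     (\<forall>(M::('a,'k) cdgB) (N::('a,'k) cdgB) pr.
        is_cdgB M \<and> is_cdgB N \<and> closed_morph M N pr \<and> fibB M N pr \<and> weqB M N pr \<longrightarrow>
        (\<forall>f. closed_morph X N f \<longrightarrow>
           (\<exists>g. closed_morph X M g \<and> (\<forall>n. \<forall>x\<in>car X n. pr n (g n x) = f n x))))"

text \<open>An element 1 (x) q(x) (degree 0)
  resp. eps (x) q(x) (degree 1) is represented by the coefficient sequence of q
  (finitely supported nat => k). eps acts by 1(x)q |-> eps(x)q, and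
  d(1(x)q) = eps (x) x q, d(eps(x)q) = 0, extending d(1(x)1) = eps(x)x.\<close>
definition finsupp :: "(nat \<Rightarrow> 'k::zero) set" where
  "finsupp = {f. finite {i. f i \<noteq> 0}}"

definition shiftx :: "(nat \<Rightarrow> 'k::zero) \<Rightarrow> (nat \<Rightarrow> 'k)" where
  "shiftx f = (\<lambda>i. if i = 0 then 0 else f (i - 1))"

definition Xmod :: "(nat, 'k::field) cdgB" where
  "Xmod = \<lparr> car = (\<lambda>n. if n = 0 \<or> n = 1 then finsupp else {0}),
            eps = (\<lambda>n f. if n = 0 then f else 0),
            dif = (\<lambda>n f. if n = 0 then shiftx f else 0) \<rparr>"

end

theory Submission
  imports Defs "HOL-Library.Nat_Bijection"
begin

text \<open>Let \<open>L = k((x\<^sup>-\<^sup>1))\<close>, on which \<open>x\<close> acts invertibly, let \<open>N = B \<otimes> L\<close> with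
  \<open>d(1 \<otimes> v) = \<epsilon> \<otimes> x v\<close>, and let \<open>M\<close> be the cone of the identity of \<open>N\<close>. The projection
  \<open>M \<rightarrow> N\<close> is surjective, and it is a weak equivalence because both Hom complexes out of a
  test module \<open>T\<close> are acyclic: \<open>Hom(T, M)\<close> since \<open>M\<close> is contractible, \<open>Hom(T, N)\<close> since a
  null-homotopy of a cocycle can be built one coefficient in \<open>x\<^sup>-\<^sup>1\<close> at a time, the invertibility
  of \<open>x\<close> driving the recursion and the freeness of \<open>T\<close> letting every functional that vanishes on
  \<open>\<epsilon>T\<close> be extended along \<open>\<epsilon>\<close>.

  The map \<open>X \<rightarrow> N\<close> induced by \<open>k[x] \<subseteq> L\<close> does not lift to \<open>M\<close>: in degree 0 a lift is forced
  to be the inclusion, and evaluating it on \<open>\<epsilon> \<otimes> x = d(1 \<otimes> 1) = \<epsilon> (1 \<otimes> x)\<close> in these two ways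
  gives the pairs \<open>(x, 1)\<close> and \<open>(x, 0)\<close>.\<close>

section \<open>Linear algebra in function spaces\<close>

lemma sum_apply: "(sum f A) x = (\<Sum>a\<in>A. f a x)"
  by (induction A rule: infinite_finite_induct) auto

lemma sc_simps [simp]:
  "sc c (v + w) = sc c v + sc c w" "sc c (v - w) = sc c v - sc c w" "sc c (- v) = - sc c v"
  "sc c 0 = 0" "sc 0 v = 0" "sc 1 v = v" "sc (- c) v = - sc c v" "sc c (sc d v) = sc (c * d) v"
  by (simp_all add: sc_def fun_eq_iff algebra_simps)

lemma sc_add_left: "sc (c + d) v = sc c v + sc d v"
  by (simp add: sc_def fun_eq_iff algebra_simps)

lemma sc_diff_left: "sc (c - d) v = sc c v - sc d v"
  by (simp add: sc_def fun_eq_iff algebra_simps)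

lemma sc_sum: "sc c (sum f I) = (\<Sum>i\<in>I. sc c (f i))"
  by (simp add: sc_def fun_eq_iff sum_apply sum_distrib_left)

lemma
  assumes "subsp S"
  shows subsp_zero: "0 \<in> S"
    and subsp_add: "x \<in> S \<Longrightarrow> y \<in> S \<Longrightarrow> x + y \<in> S"
    and subsp_sc: "x \<in> S \<Longrightarrow> sc c x \<in> S"
  using assms unfolding subsp_def by blast+

lemma subsp_uminus: "subsp S \<Longrightarrow> x \<in> S \<Longrightarrow> - x \<in> S"
  using subsp_sc[of S x "- 1"] by simp

lemma subsp_diff: "subsp S \<Longrightarrow> x \<in> S \<Longrightarrow> y \<in> S \<Longrightarrow> x - y \<in> S"
  using subsp_add[of S x "- y"] subsp_uminus[of S y] by simp

lemma subsp_sum: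
  assumes "subsp S" "\<forall>i\<in>I. x i \<in> S"
  shows "(\<Sum>i\<in>I. sc (c i) (x i)) \<in> S"
  using assms(2)
  by (induction I rule: infinite_finite_induct)
    (auto intro: subsp_zero[OF assms(1)] subsp_add[OF assms(1)] subsp_sc[OF assms(1)])

lemma
  assumes "linmap S S' f"
  shows linmap_mem: "x \<in> S \<Longrightarrow> f x \<in> S'"
    and linmap_add: "x \<in> S \<Longrightarrow> y \<in> S \<Longrightarrow> f (x + y) = f x + f y"
    and linmap_sc: "x \<in> S \<Longrightarrow> f (sc c x) = sc c (f x)"
  using assms unfolding linmap_def by blast+

lemma linmap_uminus: "linmap S S' f \<Longrightarrow> x \<in> S \<Longrightarrow> f (- x) = - f x"
  using linmap_sc[of S S' f x "- 1"] by simp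

lemma linmap_zero:
  assumes "linmap S S' f" "subsp S"
  shows "f 0 = 0"
  using linmap_sc[OF assms(1) subsp_zero[OF assms(2)], of 0] by simp

lemma linmap_sum:
  assumes "subsp S" "linmap S S' f" "\<forall>i\<in>I. x i \<in> S"
  shows "f (\<Sum>i\<in>I. sc (c i) (x i)) = (\<Sum>i\<in>I. sc (c i) (f (x i)))"
  using assms(3)
proof (induction I rule: infinite_finite_induct)
  case (insert i I)
  then have "x i \<in> S" "\<forall>j\<in>I. x j \<in> S" by simp_all
  moreover from this have "sc (c i) (x i) \<in> S" "(\<Sum>j\<in>I. sc (c j) (x j)) \<in> S"
    by (simp_all add: subsp_sc[OF assms(1)] subsp_sum[OF assms(1)])
  ultimately show ?case
    using insert.IH unfolding sum.insert[OF insert(1,2)]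
    by (simp only: linmap_add[OF assms(2)] linmap_sc[OF assms(2)])
qed (simp_all add: linmap_zero[OF assms(2,1)])

lemma linmap_comp: "linmap S S' f \<Longrightarrow> linmap S' S'' g \<Longrightarrow> linmap S S'' (\<lambda>x. g (f x))"
  unfolding linmap_def by simp

definition lin_functional :: "('a \<Rightarrow> 'k::field) set \<Rightarrow> (('a \<Rightarrow> 'k) \<Rightarrow> 'k) \<Rightarrow> bool" where
  "lin_functional S g \<longleftrightarrow>
     (\<forall>x\<in>S. \<forall>y\<in>S. g (x + y) = g x + g y) \<and> (\<forall>c. \<forall>x\<in>S. g (sc c x) = c * g x)"

lemma
  assumes "lin_functional S g"
  shows lin_functional_add: "x \<in> S \<Longrightarrow> y \<in> S \<Longrightarrow> g (x + y) = g x + g y"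
    and lin_functional_sc: "x \<in> S \<Longrightarrow> g (sc c x) = c * g x"
  using assms unfolding lin_functional_def by blast+

lemma lin_functional_uminus: "lin_functional S g \<Longrightarrow> x \<in> S \<Longrightarrow> g (- x) = - g x"
  using lin_functional_sc[of S g x "- 1"] by simp

lemma lin_functional_zero:
  assumes "lin_functional S g" "subsp S"
  shows "g 0 = 0"
  using lin_functional_sc[OF assms(1) subsp_zero[OF assms(2)], of 0] by simp

lemma lin_functional_sum:
  assumes "subsp S" "lin_functional S g" "\<forall>i\<in>I. x i \<in> S"
  shows "g (\<Sum>i\<in>I. sc (c i) (x i)) = (\<Sum>i\<in>I. c i * g (x i))"
  using assms(3)
proof (induction I rule: infinite_finite_induct)
  case (insert i I)
  then have "x i \<in> S" "\<forall>j\<in>I. x j \<in> S" by simp_all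
  moreover from this have "sc (c i) (x i) \<in> S" "(\<Sum>j\<in>I. sc (c j) (x j)) \<in> S"
    by (simp_all add: subsp_sc[OF assms(1)] subsp_sum[OF assms(1)])
  ultimately show ?case
    using insert.IH unfolding sum.insert[OF insert(1,2)]
    by (simp only: lin_functional_add[OF assms(2)] lin_functional_sc[OF assms(2)])
qed (simp_all add: lin_functional_zero[OF assms(2,1)])

lemma lin_functional_zero_fun: "lin_functional S (\<lambda>_. 0)"
  unfolding lin_functional_def by simp

lemma lin_functional_comp: "linmap S S' f \<Longrightarrow> lin_functional S' g \<Longrightarrow> lin_functional S (\<lambda>x. g (f x))"
  unfolding linmap_def lin_functional_def by simp

lemma lin_functional_diff_scaled:
  "lin_functional S g \<Longrightarrow> lin_functional S h \<Longrightarrow> lin_functional S (\<lambda>x. g x - c * h x)"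
  unfolding lin_functional_def by (simp add: algebra_simps)

lemma
  assumes "is_cdgB T"
  shows cdgB_subsp: "subsp (car T n)"
    and cdgB_eps_linmap: "linmap (car T n) (car T (n + 1)) (eps T n)"
    and cdgB_dif_linmap: "linmap (car T n) (car T (n + 1)) (dif T n)"
    and cdgB_eps_eps: "x \<in> car T n \<Longrightarrow> eps T (n + 1) (eps T n x) = 0"
    and cdgB_dif_dif: "x \<in> car T n \<Longrightarrow> dif T (n + 1) (dif T n x) = 0"
    and cdgB_dif_eps: "x \<in> car T n \<Longrightarrow> dif T (n + 1) (eps T n x) = - eps T (n + 1) (dif T n x)"
  using assms unfolding is_cdgB_def by blast+

section \<open>Laurent series in \<open>x\<^sup>-\<^sup>1\<close>\<close>

text \<open>All carriers of \<open>Defs\<close> live in \<open>nat \<Rightarrow> 'k\<close>, so a series \<open>\<Sum>\<^sub>i v\<^sub>i x\<^sup>-\<^sup>i\<close> is stored through the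
  bijection \<open>int_encode\<close>: \<open>lcoeff v i\<close> is the coefficient of \<open>x\<^sup>-\<^sup>i\<close>, \<open>laurent\<close> is \<open>k((x\<^sup>-\<^sup>1))\<close>
  and \<open>xmul\<close> is multiplication by \<open>x\<close>.\<close>

definition lcoeff :: "(nat \<Rightarrow> 'k) \<Rightarrow> int \<Rightarrow> 'k" where
  "lcoeff v i = v (int_encode i)"

definition laurent :: "(nat \<Rightarrow> 'k::zero) set" where
  "laurent = {v. \<exists>N. \<forall>i<N. lcoeff v i = 0}"

definition xmul :: "(nat \<Rightarrow> 'k) \<Rightarrow> nat \<Rightarrow> 'k" where
  "xmul v = (\<lambda>n. v (int_encode (int_decode n + 1)))"

lemma lcoeff_ext: "(\<And>i. lcoeff v i = lcoeff w i) \<Longrightarrow> v = w"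
  unfolding lcoeff_def by (metis ext int_decode_inverse)

lemma lcoeff_simps [simp]:
  "lcoeff (v + w) i = lcoeff v i + lcoeff w i" "lcoeff (v - w) i = lcoeff v i - lcoeff w i"
  "lcoeff (- v) i = - lcoeff v i" "lcoeff 0 i = 0" "lcoeff (sc c v) i = c * lcoeff v i"
  by (simp_all add: lcoeff_def sc_def)

lemma lcoeff_xmul [simp]: "lcoeff (xmul v) i = lcoeff v (i + 1)"
  by (simp add: lcoeff_def xmul_def)

lemma xmul_simps [simp]:
  "xmul (v + w) = xmul v + xmul w" "xmul (sc c v) = sc c (xmul v)" "xmul 0 = 0"
  by (simp_all add: xmul_def sc_def fun_eq_iff)

lemma laurent_subsp: "subsp (laurent :: (nat \<Rightarrow> 'k::field) set)"
  unfolding subsp_def laurent_def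
proof (intro conjI ballI allI)
  fix v w :: "nat \<Rightarrow> 'k"
  assume "v \<in> {v. \<exists>N. \<forall>i<N. lcoeff v i = 0}" "w \<in> {v. \<exists>N. \<forall>i<N. lcoeff v i = 0}"
  then obtain N M where "\<forall>i<N. lcoeff v i = 0" "\<forall>i<M. lcoeff w i = 0" by blast
  then show "v + w \<in> {v. \<exists>N. \<forall>i<N. lcoeff v i = 0}" by (auto intro!: exI[of _ "min N M"])
qed auto

lemmas laurent_closed [simp] = subsp_zero[OF laurent_subsp] subsp_add[OF laurent_subsp]
  subsp_sc[OF laurent_subsp] subsp_uminus[OF laurent_subsp] subsp_diff[OF laurent_subsp]

lemma xmul_laurent [simp]: "v \<in> laurent \<Longrightarrow> xmul v \<in> laurent"
proof -
  assume "v \<in> laurent"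
  then obtain N where "\<forall>i<N. lcoeff v i = 0" unfolding laurent_def by blast
  then have "\<forall>i<N - 1. lcoeff (xmul v) i = 0" by simp
  then show ?thesis unfolding laurent_def by blast
qed

lemma laurent_finite_bounded:
  assumes "finite F" "F \<subseteq> laurent"
  shows "\<exists>N. \<forall>v\<in>F. \<forall>i<N. lcoeff v i = 0"
  using assms
proof (induction F rule: finite_induct)
  case (insert v F)
  then obtain N M where "\<forall>w\<in>F. \<forall>i<N. lcoeff w i = 0" "\<forall>i<M. lcoeff v i = 0"
    unfolding laurent_def by auto
  then show ?case by (auto intro!: exI[of _ "min N M"])
qed simp

definition laurent_seq :: "int \<Rightarrow> (nat \<Rightarrow> 'k::zero) \<Rightarrow> nat \<Rightarrow> 'k" where
  "laurent_seq N f = (\<lambda>n. if N \<le> int_decode n then f (nat (int_decode n - N)) else 0)"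

lemma lcoeff_laurent_seq: "lcoeff (laurent_seq N f) i = (if N \<le> i then f (nat (i - N)) else 0)"
  by (simp add: lcoeff_def laurent_seq_def)

lemma laurent_seq_mem: "laurent_seq N f \<in> laurent"
  unfolding laurent_def by (auto simp: lcoeff_laurent_seq intro!: exI[of _ N])

lemma linmap_laurent_seq:
  assumes "\<And>j. lin_functional S (\<gamma> j)"
  shows "linmap S laurent (\<lambda>t. laurent_seq N (\<lambda>j. \<gamma> j t))"
  unfolding linmap_def
  using lin_functional_add[OF assms] lin_functional_sc[OF assms]
  by (auto intro!: lcoeff_ext simp: laurent_seq_mem lcoeff_laurent_seq)

lemma lin_functional_lcoeff: "linmap S laurent a \<Longrightarrow> lin_functional S (\<lambda>t. lcoeff (a t) i)"
  unfolding lin_functional_def linmap_def by simp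

text \<open>The inclusion \<open>k[x] \<subseteq> k((x\<^sup>-\<^sup>1))\<close>: the coefficient of \<open>x\<^sup>j\<close> goes to index \<open>-j\<close>.\<close>

definition poly_laurent :: "(nat \<Rightarrow> 'k::zero) \<Rightarrow> nat \<Rightarrow> 'k" where
  "poly_laurent q = (\<lambda>n. if int_decode n \<le> 0 then q (nat (- int_decode n)) else 0)"

lemma lcoeff_poly_laurent: "lcoeff (poly_laurent q) i = (if i \<le> 0 then q (nat (- i)) else 0)"
  by (simp add: lcoeff_def poly_laurent_def)

lemma poly_laurent_simps [simp]:
  "poly_laurent (q + q') = poly_laurent q + poly_laurent q'"
  "poly_laurent (sc c q) = sc c (poly_laurent q)" "poly_laurent 0 = 0"
  by (auto simp: poly_laurent_def fun_eq_iff sc_def)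

lemma poly_laurent_mem:
  assumes "q \<in> finsupp"
  shows "poly_laurent q \<in> laurent"
proof -
  obtain B where "\<forall>j. q j \<noteq> 0 \<longrightarrow> j \<le> B"
    using assms finite_nat_set_iff_bounded_le unfolding finsupp_def by auto
  then have "\<forall>i < - int B. lcoeff (poly_laurent q) i = 0"
    by (auto simp: lcoeff_poly_laurent)
  then show ?thesis unfolding laurent_def by blast
qed

lemma poly_laurent_shiftx: "poly_laurent (shiftx q) = xmul (poly_laurent q)"
proof (rule lcoeff_ext)
  fix i :: int
  have "nat (- i) = Suc (nat (- (i + 1)))" if "i < 0" using that by linarith
  then show "lcoeff (poly_laurent (shiftx q)) i = lcoeff (xmul (poly_laurent q)) i"
    by (auto simp: lcoeff_poly_laurent shiftx_def)
qed

lemma finsupp_add: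
  fixes q q' :: "nat \<Rightarrow> 'k::monoid_add"
  shows "q \<in> finsupp \<Longrightarrow> q' \<in> finsupp \<Longrightarrow> q + q' \<in> finsupp"
proof -
  have "{i. (q + q') i \<noteq> 0} \<subseteq> {i. q i \<noteq> 0} \<union> {i. q' i \<noteq> 0}" by auto
  then show "q \<in> finsupp \<Longrightarrow> q' \<in> finsupp \<Longrightarrow> q + q' \<in> finsupp"
    unfolding finsupp_def by (auto elim: finite_subset)
qed

lemma finsupp_sc: "q \<in> finsupp \<Longrightarrow> sc c q \<in> finsupp"
  unfolding finsupp_def sc_def by (auto elim: finite_subset[rotated])

section \<open>Acyclic Hom complexes\<close>

lemma ksign_sq: "ksign p * ksign p = (1::'k::field)"
  by (simp add: ksign_def)

lemma ksign_pred: "ksign (p - 1) = - (ksign p :: 'k::field)"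
  by (simp add: ksign_def)

lemma
  assumes "homB T N p g"
  shows homB_linmap: "linmap (car T n) (car N (n + p)) (g n)"
    and homB_eps: "x \<in> car T n \<Longrightarrow> g (n + 1) (eps T n x) = sc (ksign p) (eps N (n + p) (g n x))"
  using assms unfolding homB_def by blast+

lemma cocycle_dif:
  assumes "heq T (homD T N p g) (\<lambda>_ _. 0)" "x \<in> car T n"
  shows "dif N (n + p) (g n x) = sc (ksign p) (g (n + 1) (dif T n x))"
  using assms unfolding heq_def homD_def by simp

definition homB_acyclic :: "('t, 'k::field) cdgB \<Rightarrow> ('a, 'k) cdgB \<Rightarrow> bool" where
  "homB_acyclic T N \<longleftrightarrow> (\<forall>p z. homB T N p z \<and> heq T (homD T N p z) (\<lambda>_ _. 0) \<longrightarrow>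
     (\<exists>h. homB T N (p - 1) h \<and> heq T z (homD T N (p - 1) h)))"

definition contraction :: "('a, 'k::field) cdgB \<Rightarrow> (int \<Rightarrow> ('a \<Rightarrow> 'k) \<Rightarrow> ('a \<Rightarrow> 'k)) \<Rightarrow> bool" where
  "contraction M s \<longleftrightarrow>
     (\<forall>n. linmap (car M n) (car M (n - 1)) (s n)) \<and>
     (\<forall>n. \<forall>x\<in>car M n. s (n + 1) (eps M n x) = - eps M (n - 1) (s n x)) \<and>
     (\<forall>n. \<forall>x\<in>car M n. dif M (n - 1) (s n x) + s (n + 1) (dif M n x) = x)"

lemma contraction_linmap: "contraction M s \<Longrightarrow> linmap (car M n) (car M (n - 1)) (s n)"
  unfolding contraction_def by blast

lemma homB_contraction_comp:
  fixes M :: "('a, 'k::field) cdgB"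
  assumes M: "is_cdgB M" and s: "contraction M s" and z: "homB T M p z"
  shows "homB T M (p - 1) (\<lambda>n t. s (n + p) (z n t))"
  unfolding homB_def
proof (intro conjI allI ballI)
  have idx: "n + (p - 1) = n + p - 1" "n + 1 + p = n + p + 1" for n :: int
    by simp_all
  fix n
  show "linmap (car T n) (car M (n + (p - 1))) (\<lambda>t. s (n + p) (z n t))"
    unfolding idx by (rule linmap_comp[OF homB_linmap[OF z] contraction_linmap[OF s]])
  fix x assume x: "x \<in> car T n"
  have z_mem: "z n x \<in> car M (n + p)" using linmap_mem[OF homB_linmap[OF z] x] .
  have "s (n + p + 1) (eps M (n + p) (z n x)) = - eps M (n + p - 1) (s (n + p) (z n x))"
    using s z_mem unfolding contraction_def by blast
  then show "s (n + 1 + p) (z (n + 1) (eps T n x)) =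
      sc (ksign (p - 1)) (eps M (n + (p - 1)) (s (n + p) (z n x)))"
    unfolding homB_eps[OF z x] idx ksign_pred
    using linmap_sc[OF contraction_linmap[OF s] linmap_mem[OF cdgB_eps_linmap[OF M] z_mem]]
    by simp
qed

lemma homB_acyclic_if_contraction:
  fixes M :: "('a, 'k::field) cdgB"
  assumes M: "is_cdgB M" and s: "contraction M s"
  shows "homB_acyclic T M"
  unfolding homB_acyclic_def
proof (intro allI impI, elim conjE)
  fix p z
  assume z: "homB T M p z" and cocycle: "heq T (homD T M p z) (\<lambda>_ _. 0)"
  have "heq T z (homD T M (p - 1) (\<lambda>n t. s (n + p) (z n t)))"
    unfolding heq_def
  proof (intro allI ballI)
    fix n x assume x: "x \<in> car T n"
    have z_mem: "z n x \<in> car M (n + p)" using linmap_mem[OF homB_linmap[OF z] x] .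
    have "z (n + 1) (dif T n x) = sc (ksign p) (dif M (n + p) (z n x))"
      using cocycle_dif[OF cocycle x] by (simp add: ksign_sq)
    moreover have "dif M (n + p - 1) (s (n + p) (z n x)) + s (n + p + 1) (dif M (n + p) (z n x)) = z n x"
      using s z_mem unfolding contraction_def by blast
    moreover have idx: "n + (p - 1) = n + p - 1" "n + 1 + p = n + p + 1" by simp_all
    ultimately show "z n x = homD T M (p - 1) (\<lambda>n t. s (n + p) (z n t)) n x"
      unfolding homD_def ksign_pred idx
      using linmap_sc[OF contraction_linmap[OF s] linmap_mem[OF cdgB_dif_linmap[OF M] z_mem]]
      by (simp add: ksign_sq)
  qed
  with homB_contraction_comp[OF M s z]
  show "\<exists>h. homB T M (p - 1) h \<and> heq T z (homD T M (p - 1) h)" by blast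
qed

lemma homB_uminus:
  assumes N: "is_cdgB N" and g: "homB T N p g"
  shows "homB T N p (\<lambda>n t. - g n t)"
  unfolding homB_def
proof (intro conjI allI ballI)
  fix n
  show "linmap (car T n) (car N (n + p)) (\<lambda>t. - g n t)"
    using homB_linmap[OF g] subsp_uminus[OF cdgB_subsp[OF N]] unfolding linmap_def by auto
  fix x assume x: "x \<in> car T n"
  show "- g (n + 1) (eps T n x) = sc (ksign p) (eps N (n + p) (- g n x))"
    using homB_eps[OF g x] linmap_uminus[OF cdgB_eps_linmap[OF N]]
      linmap_mem[OF homB_linmap[OF g] x] by simp
qed

lemma homD_uminus:
  assumes N: "is_cdgB N" and g: "homB T N p g" and x: "x \<in> car T n"
  shows "homD T N p (\<lambda>n t. - g n t) n x = - homD T N p g n x"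
  unfolding homD_def
  using linmap_uminus[OF cdgB_dif_linmap[OF N] linmap_mem[OF homB_linmap[OF g] x]] by simp

lemma homB_zero:
  assumes N: "is_cdgB N"
  shows "homB T N p (\<lambda>_ _. 0)" "heq T (homD T N p (\<lambda>_ _. 0)) (\<lambda>_ _. 0)"
  using subsp_zero[OF cdgB_subsp[OF N]] linmap_zero[OF cdgB_eps_linmap[OF N] cdgB_subsp[OF N]]
    linmap_zero[OF cdgB_dif_linmap[OF N] cdgB_subsp[OF N]]
  unfolding homB_def heq_def homD_def linmap_def by simp_all

lemma homB_qiso_if_acyclic:
  assumes M: "is_cdgB M" and N: "is_cdgB N" and f: "closed_morph M N f"
    and acyc: "homB_acyclic T M" "homB_acyclic T N"
  shows "homB_qiso T M N f"
  unfolding homB_qiso_def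
proof (intro allI conjI impI)
  fix p z assume "homB T N p z \<and> heq T (homD T N p z) (\<lambda>_ _. 0)"
  then obtain h where h: "homB T N (p - 1) h" "heq T z (homD T N (p - 1) h)"
    using acyc(2) unfolding homB_acyclic_def by blast
  have f0: "f n 0 = 0" for n
    using f linmap_zero[OF _ cdgB_subsp[OF M]] unfolding closed_morph_def by blast
  have "heq T (\<lambda>n t. f (n + p) 0 - z n t) (homD T N (p - 1) (\<lambda>n t. - h n t))"
    using h(2) homD_uminus[OF N h(1)] unfolding heq_def f0 by simp
  then show "\<exists>z'. homB T M p z' \<and> heq T (homD T M p z') (\<lambda>_ _. 0) \<and>
      (\<exists>h. homB T N (p - 1) h \<and> heq T (\<lambda>n t. f (n + p) (z' n t) - z n t) (homD T N (p - 1) h))"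
    using homB_zero[OF M] homB_uminus[OF N h(1)] by blast
next
  fix p z'
  assume "homB T M p z' \<and> heq T (homD T M p z') (\<lambda>_ _. 0) \<and>
    (\<exists>h. homB T N (p - 1) h \<and> heq T (\<lambda>n t. f (n + p) (z' n t)) (homD T N (p - 1) h))"
  then show "\<exists>h'. homB T M (p - 1) h' \<and> heq T z' (homD T M (p - 1) h')"
    using acyc(1) unfolding homB_acyclic_def by blast
qed

section \<open>Free CDG \<open>B\<close>-modules of finite rank\<close>

definition free_comb :: "('a, 'k::field) cdgB \<Rightarrow> nat \<Rightarrow> (nat \<Rightarrow> int) \<Rightarrow> (nat \<Rightarrow> 'a \<Rightarrow> 'k)
    \<Rightarrow> int \<Rightarrow> (nat \<Rightarrow> 'k) \<Rightarrow> (nat \<Rightarrow> 'k) \<Rightarrow> 'a \<Rightarrow> 'k" where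
  "free_comb T r deg gen m a b =
     (\<Sum>i\<in>{i. i < r \<and> deg i = m}. sc (a i) (gen i)) +
     (\<Sum>i\<in>{i. i < r \<and> deg i + 1 = m}. sc (b i) (eps T (deg i) (gen i)))"

definition free_basis :: "('a, 'k::field) cdgB \<Rightarrow> nat \<Rightarrow> (nat \<Rightarrow> int) \<Rightarrow> (nat \<Rightarrow> 'a \<Rightarrow> 'k) \<Rightarrow> bool" where
  "free_basis T r deg gen \<longleftrightarrow> (\<forall>i<r. gen i \<in> car T (deg i)) \<and>
     (\<forall>m. \<forall>t\<in>car T m. \<exists>a b. t = free_comb T r deg gen m a b) \<and>
     (\<forall>m a b. free_comb T r deg gen m a b = 0 \<longrightarrow>
        (\<forall>i<r. (deg i = m \<longrightarrow> a i = 0) \<and> (deg i + 1 = m \<longrightarrow> b i = 0)))"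

lemma free_fin_iff_basis: "free_fin T \<longleftrightarrow> (\<exists>r deg gen. free_basis T r deg gen)"
  unfolding free_fin_def free_basis_def free_comb_def Let_def ..

lemma
  assumes "free_basis T r deg gen"
  shows free_basis_gen: "i < r \<Longrightarrow> gen i \<in> car T (deg i)"
    and free_basis_span: "t \<in> car T m \<Longrightarrow> \<exists>a b. t = free_comb T r deg gen m a b"
  using assms unfolding free_basis_def by blast+

lemma free_basis_mem:
  assumes T: "is_cdgB T" and B: "free_basis T r deg gen"
  shows "\<forall>i\<in>{i. i < r \<and> deg i = m}. gen i \<in> car T m"
    and "\<forall>i\<in>{i. i < r \<and> deg i + 1 = m}. eps T (deg i) (gen i) \<in> car T m"
proof -
  show "\<forall>i\<in>{i. i < r \<and> deg i = m}. gen i \<in> car T m"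
    using free_basis_gen[OF B] by auto
  show "\<forall>i\<in>{i. i < r \<and> deg i + 1 = m}. eps T (deg i) (gen i) \<in> car T m"
  proof
    fix i assume "i \<in> {i. i < r \<and> deg i + 1 = m}"
    then have "i < r" "deg i + 1 = m" by auto
    have "eps T (deg i) (gen i) \<in> car T (deg i + 1)"
      by (rule linmap_mem[OF cdgB_eps_linmap[OF T] free_basis_gen[OF B \<open>i < r\<close>]])
    then show "eps T (deg i) (gen i) \<in> car T m" using \<open>deg i + 1 = m\<close> by simp
  qed
qed

lemma free_comb_add:
  "free_comb T r deg gen m a b + free_comb T r deg gen m a' b' =
   free_comb T r deg gen m (\<lambda>i. a i + a' i) (\<lambda>i. b i + b' i)"
  by (simp add: free_comb_def sc_add_left sum.distrib)

lemma free_comb_sc: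
  "sc c (free_comb T r deg gen m a b) = free_comb T r deg gen m (\<lambda>i. c * a i) (\<lambda>i. c * b i)"
  by (simp add: free_comb_def sc_sum)

lemma free_comb_diff:
  "free_comb T r deg gen m a b - free_comb T r deg gen m a' b' =
   free_comb T r deg gen m (\<lambda>i. a i - a' i) (\<lambda>i. b i - b' i)"
  by (simp add: free_comb_def sc_diff_left sum_subtractf)

lemma free_comb_unique:
  assumes B: "free_basis T r deg gen"
    and eq: "free_comb T r deg gen m a b = free_comb T r deg gen m a' b'"
    and i: "i < r" "deg i + 1 = m"
  shows "b i = b' i"
proof -
  have "free_comb T r deg gen m (\<lambda>i. a i - a' i) (\<lambda>i. b i - b' i) = 0"
    using free_comb_diff[of T r deg gen m a b a' b'] eq by simp
  then have "b i - b' i = 0" using B i unfolding free_basis_def by blast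
  then show ?thesis by simp
qed

lemma eps_free_comb:
  assumes T: "is_cdgB T" and B: "free_basis T r deg gen"
  shows "eps T m (free_comb T r deg gen m a b) = free_comb T r deg gen (m + 1) (\<lambda>_. 0) a"
proof -
  let ?I0 = "{i. i < r \<and> deg i = m}" and ?I1 = "{i. i < r \<and> deg i + 1 = m}"
  note eps_lin = cdgB_eps_linmap[OF T, of m]
  note gen0 = free_basis_mem(1)[OF T B, of m] and eps_gen1 = free_basis_mem(2)[OF T B, of m]
  have gen1: "\<forall>i\<in>?I1. gen i \<in> car T (m - 1)"
    using free_basis_gen[OF B] by force
  have "eps T m (\<Sum>i\<in>?I1. sc (b i) (eps T (deg i) (gen i))) = 0"
    unfolding linmap_sum[OF cdgB_subsp[OF T] eps_lin eps_gen1]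
    using cdgB_eps_eps[OF T] gen1 by (intro sum.neutral) fastforce
  moreover have "eps T m (\<Sum>i\<in>?I0. sc (a i) (gen i)) =
      (\<Sum>i\<in>{i. i < r \<and> deg i + 1 = m + 1}. sc (a i) (eps T (deg i) (gen i)))"
    unfolding linmap_sum[OF cdgB_subsp[OF T] eps_lin gen0] by (rule sum.cong) auto
  ultimately show ?thesis
    unfolding free_comb_def
    using linmap_add[OF eps_lin subsp_sum[OF cdgB_subsp[OF T] gen0] subsp_sum[OF cdgB_subsp[OF T] eps_gen1]]
    by simp
qed

lemma lin_functional_free_comb:
  assumes T: "is_cdgB T" and B: "free_basis T r deg gen" and g: "lin_functional (car T m) g"
  shows "g (free_comb T r deg gen m a b) =
    (\<Sum>i\<in>{i. i < r \<and> deg i = m}. a i * g (gen i)) +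
    (\<Sum>i\<in>{i. i < r \<and> deg i + 1 = m}. b i * g (eps T (deg i) (gen i)))"
proof -
  note gen0 = free_basis_mem(1)[OF T B, of m] and eps_gen1 = free_basis_mem(2)[OF T B, of m]
  show ?thesis
    unfolding free_comb_def
    using lin_functional_add[OF g subsp_sum[OF cdgB_subsp[OF T] gen0] subsp_sum[OF cdgB_subsp[OF T] eps_gen1]]
      lin_functional_sum[OF cdgB_subsp[OF T] g gen0] lin_functional_sum[OF cdgB_subsp[OF T] g eps_gen1]
    by simp
qed

lemma free_coordinate:
  assumes T: "is_cdgB T" and B: "free_basis T r deg gen" and i: "i < r" "deg i + 1 = m"
  shows "\<exists>\<kappa>. lin_functional (car T m) \<kappa> \<and> (\<forall>a b. \<kappa> (free_comb T r deg gen m a b) = b i)"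
proof -
  define \<kappa> where "\<kappa> t = snd (SOME ab. t = free_comb T r deg gen m (fst ab) (snd ab)) i" for t
  have \<kappa>: "\<kappa> (free_comb T r deg gen m a b) = b i" for a b
  proof -
    let ?t = "free_comb T r deg gen m a b"
    have "\<exists>ab. ?t = free_comb T r deg gen m (fst ab) (snd ab)" by auto
    then have "?t = free_comb T r deg gen m (fst (SOME ab. ?t = free_comb T r deg gen m (fst ab) (snd ab)))
        (snd (SOME ab. ?t = free_comb T r deg gen m (fst ab) (snd ab)))"
      by (rule someI_ex)
    then have "b i = snd (SOME ab. ?t = free_comb T r deg gen m (fst ab) (snd ab)) i"
      by (rule free_comb_unique[OF B _ i])
    then show ?thesis unfolding \<kappa>_def by simp
  qed
  note span = free_basis_span[OF B]
  have "lin_functional (car T m) \<kappa>"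
    unfolding lin_functional_def
  proof (intro conjI ballI allI)
    fix x y assume "x \<in> car T m" "y \<in> car T m"
    then obtain a b a' b' where "x = free_comb T r deg gen m a b" "y = free_comb T r deg gen m a' b'"
      using span by blast
    then show "\<kappa> (x + y) = \<kappa> x + \<kappa> y" by (simp only: free_comb_add \<kappa>)
  next
    fix c x assume "x \<in> car T m"
    then obtain a b where "x = free_comb T r deg gen m a b" using span by blast
    then show "\<kappa> (sc c x) = c * \<kappa> x" by (simp only: free_comb_sc \<kappa>)
  qed
  then show ?thesis using \<kappa> by blast
qed

lemma lin_functional_extends_along_eps:
  assumes T: "is_cdgB T" "free_fin T" and g: "lin_functional (car T m) g"
    and g_eps: "\<forall>t\<in>car T (m - 1). g (eps T (m - 1) t) = 0"
  obtains e where "lin_functional (car T (m + 1)) e" "\<forall>t\<in>car T m. e (eps T m t) = g t"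
proof -
  obtain r deg gen where B: "free_basis T r deg gen"
    using T(2) unfolding free_fin_iff_basis by blast
  let ?I0 = "{i. i < r \<and> deg i = m}" and ?I1 = "{i. i < r \<and> deg i + 1 = m}"
  have "\<forall>i\<in>?I0. \<exists>\<kappa>. lin_functional (car T (m + 1)) \<kappa> \<and>
      (\<forall>a b. \<kappa> (free_comb T r deg gen (m + 1) a b) = b i)"
    using free_coordinate[OF T(1) B] by simp
  then obtain \<kappa> where "\<forall>i\<in>?I0. lin_functional (car T (m + 1)) (\<kappa> i) \<and>
      (\<forall>a b. \<kappa> i (free_comb T r deg gen (m + 1) a b) = b i)"
    by (rule bchoice[elim_format]) blast
  then have \<kappa>: "\<And>i. i \<in> ?I0 \<Longrightarrow> lin_functional (car T (m + 1)) (\<kappa> i)"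
    "\<And>i a b. i \<in> ?I0 \<Longrightarrow> \<kappa> i (free_comb T r deg gen (m + 1) a b) = b i"
    by blast+
  define e where "e t = (\<Sum>i\<in>?I0. \<kappa> i t * g (gen i))" for t
  have "lin_functional (car T (m + 1)) e"
    unfolding lin_functional_def e_def
    using lin_functional_add[OF \<kappa>(1)] lin_functional_sc[OF \<kappa>(1)]
    by (simp add: sum.distrib sum_distrib_left algebra_simps)
  moreover have "e (eps T m t) = g t" if t_mem: "t \<in> car T m" for t
  proof -
    obtain a b where t: "t = free_comb T r deg gen m a b"
      using free_basis_span[OF B t_mem] by blast
    have "g (eps T (deg i) (gen i)) = 0" if "i \<in> ?I1" for i
    proof -
      from that have "deg i = m - 1" "gen i \<in> car T (deg i)"
        using free_basis_gen[OF B] by auto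
      then show ?thesis using g_eps by simp
    qed
    then have "g t = (\<Sum>i\<in>?I0. a i * g (gen i))"
      unfolding t lin_functional_free_comb[OF T(1) B g] by simp
    also have "\<dots> = e (eps T m t)"
      unfolding t eps_free_comb[OF T(1) B] e_def using \<kappa>(2) by simp
    finally show ?thesis ..
  qed
  ultimately show ?thesis using that by blast
qed

lemma linmap_laurent_bounded_below:
  assumes T: "is_cdgB T" "free_fin T" and a: "linmap (car T m) laurent a"
  obtains N where "\<forall>t\<in>car T m. \<forall>i<N. lcoeff (a t) i = 0"
proof -
  obtain r deg gen where B: "free_basis T r deg gen"
    using T(2) unfolding free_fin_iff_basis by blast
  let ?G = "gen ` {i. i < r \<and> deg i = m} \<union>
    (\<lambda>i. eps T (deg i) (gen i)) ` {i. i < r \<and> deg i + 1 = m}"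
  have "?G \<subseteq> car T m"
    using free_basis_mem[OF T(1) B] by blast
  then have "a ` ?G \<subseteq> laurent" using linmap_mem[OF a] by blast
  then obtain N where N: "\<forall>v\<in>a ` ?G. \<forall>i<N. lcoeff v i = 0"
    using laurent_finite_bounded[of "a ` ?G"] by auto
  have "lcoeff (a t) i = 0" if t_mem: "t \<in> car T m" and "i < N" for t i
  proof -
    obtain u w where t: "t = free_comb T r deg gen m u w"
      using free_basis_span[OF B t_mem] by blast
    show ?thesis
      unfolding t lin_functional_free_comb[OF T(1) B lin_functional_lcoeff[OF a]]
      using N \<open>i < N\<close> by simp
  qed
  then show ?thesis using that by blast
qed

section \<open>Acyclicity of \<open>Hom(T, B \<otimes> k((x\<^sup>-\<^sup>1)))\<close>\<close>

text \<open>One step of the coefficientwise construction in \<open>laurent_cocycle\<close> below: \<open>\<gamma>\<close> and \<open>\<eta>\<close> are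
  the current coefficients of the two components of the null-homotopy, \<open>\<gamma>'\<close> is the next
  coefficient of the first one.\<close>

lemma nullhomotopy_coefficient_step:
  fixes T :: "('a, 'k::field) cdgB" and \<sigma> :: 'k
  assumes T: "is_cdgB T" and \<sigma>: "\<sigma> * \<sigma> = 1"
    and \<beta>: "lin_functional (car T m) \<beta>" and \<eta>: "lin_functional (car T (m + 1)) \<eta>"
    and \<eta>_eps: "\<forall>t\<in>car T m. \<eta> (eps T m t) = - \<sigma> * \<gamma> t"
    and \<alpha>: "\<forall>t\<in>car T (m - 1). \<alpha> t = \<sigma> * \<gamma> (dif T (m - 1) t)"
    and \<beta>_eps: "\<forall>t\<in>car T (m - 1). \<beta> (eps T (m - 1) t) = \<sigma> * \<alpha> t"
    and \<gamma>': "\<And>t. \<gamma>' t = \<beta> t - \<sigma> * \<eta> (dif T m t)"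
  shows "lin_functional (car T m) \<gamma>'"
    and "\<forall>t\<in>car T (m - 1). \<gamma>' (eps T (m - 1) t) = 0"
    and "\<forall>t\<in>car T (m - 1). \<beta> (dif T (m - 1) t) = \<gamma>' (dif T (m - 1) t)"
proof -
  note d = cdgB_dif_linmap[OF T, of m]
  have "\<gamma>' = (\<lambda>t. \<beta> t - \<sigma> * \<eta> (dif T m t))" by (rule ext) (rule \<gamma>')
  then show "lin_functional (car T m) \<gamma>'"
    using lin_functional_diff_scaled[OF \<beta> lin_functional_comp[OF d \<eta>]] by simp
  show "\<forall>t\<in>car T (m - 1). \<gamma>' (eps T (m - 1) t) = 0"
  proof
    fix t assume t: "t \<in> car T (m - 1)"
    have dt: "dif T (m - 1) t \<in> car T m"
      using linmap_mem[OF cdgB_dif_linmap[OF T] t] by simp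
    have "dif T m (eps T (m - 1) t) = - eps T m (dif T (m - 1) t)"
      using cdgB_dif_eps[OF T t] by simp
    then have "\<eta> (dif T m (eps T (m - 1) t)) = \<sigma> * \<gamma> (dif T (m - 1) t)"
      using lin_functional_uminus[OF \<eta> linmap_mem[OF cdgB_eps_linmap[OF T] dt]] \<eta>_eps dt
      by simp
    then have "\<gamma>' (eps T (m - 1) t) = \<sigma> * \<alpha> t - \<sigma> * \<sigma> * \<gamma> (dif T (m - 1) t)"
      unfolding \<gamma>' using \<beta>_eps t by (simp add: mult.assoc)
    then show "\<gamma>' (eps T (m - 1) t) = 0"
      using \<alpha> t \<sigma> by simp
  qed
  show "\<forall>t\<in>car T (m - 1). \<beta> (dif T (m - 1) t) = \<gamma>' (dif T (m - 1) t)"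
    unfolding \<gamma>'
    using cdgB_dif_dif[OF T, of _ "m - 1"] lin_functional_zero[OF \<eta> cdgB_subsp[OF T]] by simp
qed

text \<open>\<open>a\<close> and \<open>b\<close> are the components of a cocycle of \<open>Hom(T, B \<otimes> k((x\<^sup>-\<^sup>1)))\<close> in the source
  degrees \<open>m - 1\<close> and \<open>m\<close> (see \<open>laurent_hom\<close> below).\<close>

locale laurent_cocycle =
  fixes T :: "('a, 'k::field) cdgB" and m :: int and \<sigma> :: 'k
    and a b :: "('a \<Rightarrow> 'k) \<Rightarrow> nat \<Rightarrow> 'k" and N :: int
  assumes T: "is_cdgB T" "free_fin T" and \<sigma>: "\<sigma> * \<sigma> = 1"
    and a: "linmap (car T (m - 1)) laurent a" and b: "linmap (car T m) laurent b"
    and b_eps: "\<forall>t\<in>car T (m - 1). b (eps T (m - 1) t) = sc \<sigma> (a t)"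
    and a_dif: "\<forall>t\<in>car T (m - 1). xmul (a t) = sc \<sigma> (b (dif T (m - 1) t))"
    and b_low: "\<forall>t\<in>car T m. \<forall>i<N. lcoeff (b t) i = 0"
begin

definition \<alpha> :: "nat \<Rightarrow> ('a \<Rightarrow> 'k) \<Rightarrow> 'k" where
  "\<alpha> j t = lcoeff (a t) (N + int j)"

definition \<beta> :: "nat \<Rightarrow> ('a \<Rightarrow> 'k) \<Rightarrow> 'k" where
  "\<beta> j t = lcoeff (b t) (N + int j)"

lemma dif_mem: "t \<in> car T (m - 1) \<Longrightarrow> dif T (m - 1) t \<in> car T m"
  using linmap_mem[OF cdgB_dif_linmap[OF T(1)]] by fastforce

lemma lcoeff_a: "t \<in> car T (m - 1) \<Longrightarrow> lcoeff (a t) (i + 1) = \<sigma> * lcoeff (b (dif T (m - 1) t)) i"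
  using a_dif by (metis lcoeff_simps(5) lcoeff_xmul)

lemma a_low: "t \<in> car T (m - 1) \<Longrightarrow> i \<le> N \<Longrightarrow> lcoeff (a t) i = 0"
  using lcoeff_a[of t "i - 1"] b_low dif_mem by simp

lemma \<beta>_lin: "lin_functional (car T m) (\<beta> j)"
  unfolding \<beta>_def[abs_def] by (rule lin_functional_lcoeff[OF b])

lemma \<beta>_eps: "\<forall>t\<in>car T (m - 1). \<beta> j (eps T (m - 1) t) = \<sigma> * \<alpha> j t"
  using b_eps by (simp add: \<alpha>_def \<beta>_def)

lemma \<alpha>_Suc: "\<forall>t\<in>car T (m - 1). \<alpha> (Suc j) t = \<sigma> * \<beta> j (dif T (m - 1) t)"
proof
  fix t assume "t \<in> car T (m - 1)"
  moreover have "N + int (Suc j) = N + int j + 1" by simp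
  ultimately show "\<alpha> (Suc j) t = \<sigma> * \<beta> j (dif T (m - 1) t)"
    unfolding \<alpha>_def \<beta>_def by (simp only: lcoeff_a)
qed

text \<open>The null-homotopy is built one coefficient at a time: \<open>e_coeff j\<close> extends
  \<open>-\<sigma> c_coeff j\<close> along \<open>\<epsilon>\<close>, which then determines \<open>c_coeff (j + 1)\<close>.\<close>

primrec e_coeff :: "nat \<Rightarrow> ('a \<Rightarrow> 'k) \<Rightarrow> 'k" where
  "e_coeff 0 = (\<lambda>_. 0)"
| "e_coeff (Suc j) = (SOME e. lin_functional (car T (m + 1)) e \<and>
     (\<forall>t\<in>car T m. e (eps T m t) = - \<sigma> * (\<beta> j t - \<sigma> * e_coeff j (dif T m t))))"

definition c_coeff :: "nat \<Rightarrow> ('a \<Rightarrow> 'k) \<Rightarrow> 'k" where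
  "c_coeff j = (case j of 0 \<Rightarrow> (\<lambda>_. 0) | Suc i \<Rightarrow> (\<lambda>t. \<beta> i t - \<sigma> * e_coeff i (dif T m t)))"

lemma c_coeff_0: "c_coeff 0 t = 0"
  by (simp add: c_coeff_def)

lemma c_coeff_Suc: "c_coeff (Suc j) t = \<beta> j t - \<sigma> * e_coeff j (dif T m t)"
  by (simp add: c_coeff_def)

lemma e_coeff_Suc: "e_coeff (Suc j) = (SOME e. lin_functional (car T (m + 1)) e \<and>
    (\<forall>t\<in>car T m. e (eps T m t) = - \<sigma> * c_coeff (Suc j) t))"
  by (simp add: c_coeff_Suc)

lemma e_coeff_invariant:
  "lin_functional (car T (m + 1)) (e_coeff j) \<and>
   (\<forall>t\<in>car T m. e_coeff j (eps T m t) = - \<sigma> * c_coeff j t) \<and>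
   (\<forall>t\<in>car T (m - 1). \<alpha> j t = \<sigma> * c_coeff j (dif T (m - 1) t))"
proof (induction j)
  case 0
  show ?case using a_low lin_functional_zero_fun by (simp add: c_coeff_0 \<alpha>_def)
next
  case (Suc j)
  then have "lin_functional (car T (m + 1)) (e_coeff j)"
    "\<forall>t\<in>car T m. e_coeff j (eps T m t) = - \<sigma> * c_coeff j t"
    "\<forall>t\<in>car T (m - 1). \<alpha> j t = \<sigma> * c_coeff j (dif T (m - 1) t)"
    by blast+
  note step = nullhomotopy_coefficient_step[OF T(1) \<sigma> \<beta>_lin this \<beta>_eps c_coeff_Suc]
  obtain e where "lin_functional (car T (m + 1)) e"
    "\<forall>t\<in>car T m. e (eps T m t) = 0 - \<sigma> * c_coeff (Suc j) t"
    by (rule lin_functional_extends_along_eps[OF T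
          lin_functional_diff_scaled[OF lin_functional_zero_fun step(1)]])
      (simp add: step(2))
  then have "\<exists>e. lin_functional (car T (m + 1)) e \<and>
      (\<forall>t\<in>car T m. e (eps T m t) = - \<sigma> * c_coeff (Suc j) t)"
    by auto
  then have "lin_functional (car T (m + 1)) (e_coeff (Suc j)) \<and>
      (\<forall>t\<in>car T m. e_coeff (Suc j) (eps T m t) = - \<sigma> * c_coeff (Suc j) t)"
    unfolding e_coeff_Suc by (rule someI_ex)
  moreover have "\<forall>t\<in>car T (m - 1). \<alpha> (Suc j) t = \<sigma> * c_coeff (Suc j) (dif T (m - 1) t)"
    using \<alpha>_Suc step(3) by simp
  ultimately show ?case by blast
qed

lemma c_coeff_lin_eps:
  "lin_functional (car T m) (c_coeff j) \<and> (\<forall>t\<in>car T (m - 1). c_coeff j (eps T (m - 1) t) = 0)"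
proof (cases j)
  case 0
  then show ?thesis using lin_functional_zero_fun by (simp add: c_coeff_def)
next
  case (Suc i)
  have "lin_functional (car T (m + 1)) (e_coeff i)"
    "\<forall>t\<in>car T m. e_coeff i (eps T m t) = - \<sigma> * c_coeff i t"
    "\<forall>t\<in>car T (m - 1). \<alpha> i t = \<sigma> * c_coeff i (dif T (m - 1) t)"
    using e_coeff_invariant by blast+
  from nullhomotopy_coefficient_step[OF T(1) \<sigma> \<beta>_lin this \<beta>_eps c_coeff_Suc]
  show ?thesis unfolding Suc by blast
qed

definition c_map :: "('a \<Rightarrow> 'k) \<Rightarrow> nat \<Rightarrow> 'k" where
  "c_map t = laurent_seq N (\<lambda>j. c_coeff j t)"

definition e_map :: "('a \<Rightarrow> 'k) \<Rightarrow> nat \<Rightarrow> 'k" where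
  "e_map t = laurent_seq N (\<lambda>j. e_coeff j t)"

lemma c_map_linmap: "linmap (car T m) laurent c_map"
  unfolding c_map_def using c_coeff_lin_eps by (intro linmap_laurent_seq) blast

lemma e_map_linmap: "linmap (car T (m + 1)) laurent e_map"
  unfolding e_map_def using e_coeff_invariant by (intro linmap_laurent_seq) blast

lemma c_map_eps: "\<forall>t\<in>car T (m - 1). c_map (eps T (m - 1) t) = 0"
  using c_coeff_lin_eps by (auto intro!: lcoeff_ext simp: c_map_def lcoeff_laurent_seq)

lemma e_map_eps: "\<forall>t\<in>car T m. e_map (eps T m t) = sc (- \<sigma>) (c_map t)"
  using e_coeff_invariant by (auto intro!: lcoeff_ext simp: c_map_def e_map_def lcoeff_laurent_seq)

lemma a_eq: "\<forall>t\<in>car T (m - 1). a t = sc \<sigma> (c_map (dif T (m - 1) t))"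
proof (intro ballI lcoeff_ext)
  fix t i assume t: "t \<in> car T (m - 1)"
  show "lcoeff (a t) i = lcoeff (sc \<sigma> (c_map (dif T (m - 1) t))) i"
  proof (cases "N \<le> i")
    case True
    have "lcoeff (a t) (N + int (nat (i - N))) = \<sigma> * c_coeff (nat (i - N)) (dif T (m - 1) t)"
      using e_coeff_invariant t unfolding \<alpha>_def by blast
    then show ?thesis using True by (simp add: c_map_def lcoeff_laurent_seq)
  qed (use a_low t in \<open>simp add: c_map_def lcoeff_laurent_seq\<close>)
qed

lemma b_eq: "\<forall>t\<in>car T m. b t = xmul (c_map t) + sc \<sigma> (e_map (dif T m t))"
proof (intro ballI lcoeff_ext)
  fix t i assume t: "t \<in> car T m"
  show "lcoeff (b t) i = lcoeff (xmul (c_map t) + sc \<sigma> (e_map (dif T m t))) i"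
  proof (cases "N \<le> i")
    case True
    have "lcoeff (b t) (N + int (nat (i - N))) =
        c_coeff (Suc (nat (i - N))) t + \<sigma> * e_coeff (nat (i - N)) (dif T m t)"
      by (simp add: c_coeff_Suc \<beta>_def)
    moreover have "nat (i + 1 - N) = Suc (nat (i - N))" using True by simp
    ultimately show ?thesis using True by (simp add: c_map_def e_map_def lcoeff_laurent_seq)
  next
    case False
    then have "N \<le> i + 1 \<Longrightarrow> nat (i + 1 - N) = 0" by simp
    then show ?thesis using False b_low t by (simp add: c_map_def e_map_def lcoeff_laurent_seq c_coeff_0)
  qed
qed

end

lemma laurent_nullhomotopy:
  fixes T :: "('a, 'k::field) cdgB" and \<sigma> :: 'k
  assumes T: "is_cdgB T" "free_fin T" and \<sigma>: "\<sigma> * \<sigma> = 1"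
    and a: "linmap (car T (m - 1)) laurent a" and b: "linmap (car T m) laurent b"
    and b_eps: "\<forall>t\<in>car T (m - 1). b (eps T (m - 1) t) = sc \<sigma> (a t)"
    and a_dif: "\<forall>t\<in>car T (m - 1). xmul (a t) = sc \<sigma> (b (dif T (m - 1) t))"
  obtains c e where "linmap (car T m) laurent c" "linmap (car T (m + 1)) laurent e"
    "\<forall>t\<in>car T (m - 1). c (eps T (m - 1) t) = 0"
    "\<forall>t\<in>car T m. e (eps T m t) = sc (- \<sigma>) (c t)"
    "\<forall>t\<in>car T (m - 1). a t = sc \<sigma> (c (dif T (m - 1) t))"
    "\<forall>t\<in>car T m. b t = xmul (c t) + sc \<sigma> (e (dif T m t))"
proof -
  obtain N where "\<forall>t\<in>car T m. \<forall>i<N. lcoeff (b t) i = 0"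
    using linmap_laurent_bounded_below[OF T b] by blast
  then interpret laurent_cocycle T m \<sigma> a b N
    using T \<sigma> a b b_eps a_dif by unfold_locales
  show ?thesis
    by (rule that[OF c_map_linmap e_map_linmap c_map_eps e_map_eps a_eq b_eq])
qed

text \<open>\<open>B \<otimes> k((x\<^sup>-\<^sup>1))\<close> with \<open>d(1 \<otimes> v) = \<epsilon> \<otimes> x v\<close>.\<close>

definition laurent_mod :: "(nat, 'k::field) cdgB" where
  "laurent_mod = \<lparr>car = (\<lambda>n. if n = 0 \<or> n = 1 then laurent else {0}),
     eps = (\<lambda>n v. if n = 0 then v else 0),
     dif = (\<lambda>n v. if n = 0 then xmul v else 0)\<rparr>"

lemma laurent_mod_simps [simp]:
  "car laurent_mod n = (if n = 0 \<or> n = 1 then laurent else {0})"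
  "eps laurent_mod n v = (if n = 0 then v else 0)"
  "dif laurent_mod n v = (if n = 0 then xmul v else 0)"
  by (simp_all add: laurent_mod_def)

lemma laurent_mod_cdgB: "is_cdgB (laurent_mod :: (nat, 'k::field) cdgB)"
  unfolding is_cdgB_def by (auto simp: subsp_def linmap_def)

definition laurent_hom :: "int \<Rightarrow> (('a \<Rightarrow> 'k) \<Rightarrow> nat \<Rightarrow> 'k) \<Rightarrow> (('a \<Rightarrow> 'k) \<Rightarrow> nat \<Rightarrow> 'k::zero)
    \<Rightarrow> int \<Rightarrow> ('a \<Rightarrow> 'k) \<Rightarrow> nat \<Rightarrow> 'k" where
  "laurent_hom p a b = (\<lambda>n t. if n = - p then a t else if n = 1 - p then b t else 0)"

lemma homB_laurent_hom:
  fixes T :: "('a, 'k::field) cdgB"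
  assumes a: "linmap (car T (- p)) laurent a" and b: "linmap (car T (1 - p)) laurent b"
    and a_eps: "\<forall>t\<in>car T (- p - 1). a (eps T (- p - 1) t) = 0"
    and b_eps: "\<forall>t\<in>car T (- p). b (eps T (- p) t) = sc (ksign p) (a t)"
  shows "homB T laurent_mod p (laurent_hom p a b)"
  unfolding homB_def
proof (intro conjI allI ballI)
  fix n
  consider "n = - p" | "n = 1 - p" | "n \<noteq> - p" "n \<noteq> 1 - p" by blast
  then show "linmap (car T n) (car laurent_mod (n + p)) (laurent_hom p a b n)"
    by cases (use a b in \<open>auto simp: laurent_hom_def linmap_def\<close>)
  fix x assume "x \<in> car T n"
  then show "laurent_hom p a b (n + 1) (eps T n x) =
      sc (ksign p) (eps laurent_mod (n + p) (laurent_hom p a b n x))"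
    using a_eps b_eps unfolding laurent_hom_def
    by (cases "n = - p - 1") auto
qed

lemma homD_laurent_hom:
  "homD T laurent_mod p (laurent_hom p a b) =
   laurent_hom (p + 1) (\<lambda>t. - sc (ksign p) (a (dif T (- p - 1) t)))
     (\<lambda>t. xmul (a t) - sc (ksign p) (b (dif T (- p) t)))"
  unfolding homD_def laurent_hom_def by (auto simp: fun_eq_iff)

lemma homB_laurent_mod_eq:
  assumes "homB T laurent_mod p g"
  shows "heq T g (laurent_hom p (g (- p)) (g (1 - p)))"
  unfolding heq_def laurent_hom_def
  using linmap_mem[OF homB_linmap[OF assms]] by fastforce

lemma heq_laurent_hom:
  "(\<forall>t\<in>car T (- p). a t = a' t) \<Longrightarrow> (\<forall>t\<in>car T (1 - p). b t = b' t) \<Longrightarrow>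
   heq T (laurent_hom p a b) (laurent_hom p a' b')"
  unfolding heq_def laurent_hom_def by auto

lemma homB_acyclic_laurent_mod:
  fixes T :: "('a, 'k::field) cdgB"
  assumes T: "is_cdgB T" "free_fin T"
  shows "homB_acyclic T laurent_mod"
  unfolding homB_acyclic_def
proof (intro allI impI, elim conjE)
  fix p z
  assume z: "homB T laurent_mod p z" and cocycle: "heq T (homD T laurent_mod p z) (\<lambda>_ _. 0)"
  have idx: "1 - p - 1 = - p" "1 - p + 1 = 2 - p" "- (p - 1) = 1 - p" "1 - (p - 1) = 2 - p"
    "- (p - 1) - 1 = - p" "p - 1 + 1 = p" by simp_all
  have "linmap (car T (- p)) laurent (z (- p))" "linmap (car T (1 - p)) laurent (z (1 - p))"
    using homB_linmap[OF z, of "- p"] homB_linmap[OF z, of "1 - p"] by simp_all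
  moreover have "\<forall>t\<in>car T (- p). z (1 - p) (eps T (- p) t) = sc (ksign p) (z (- p) t)"
    using homB_eps[OF z, of _ "- p"] by simp
  moreover have "\<forall>t\<in>car T (- p). xmul (z (- p) t) = sc (ksign p) (z (1 - p) (dif T (- p) t))"
    using cocycle_dif[OF cocycle, of _ "- p"] by simp
  ultimately obtain c e where c: "linmap (car T (1 - p)) laurent c"
    and e: "linmap (car T (2 - p)) laurent e"
    and c_eps: "\<forall>t\<in>car T (- p). c (eps T (- p) t) = 0"
    and e_eps: "\<forall>t\<in>car T (1 - p). e (eps T (1 - p) t) = sc (- ksign p) (c t)"
    and a_eq: "\<forall>t\<in>car T (- p). z (- p) t = sc (ksign p) (c (dif T (- p) t))"
    and b_eq: "\<forall>t\<in>car T (1 - p). z (1 - p) t = xmul (c t) + sc (ksign p) (e (dif T (1 - p) t))"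
    by (rule laurent_nullhomotopy[OF T ksign_sq, of "1 - p", unfolded idx])
  have "homB T laurent_mod (p - 1) (laurent_hom (p - 1) c e)"
    by (rule homB_laurent_hom) (use c e c_eps e_eps in \<open>simp_all add: idx ksign_pred\<close>)
  moreover have "heq T (laurent_hom p (z (- p)) (z (1 - p)))
      (homD T laurent_mod (p - 1) (laurent_hom (p - 1) c e))"
    unfolding homD_laurent_hom idx ksign_pred
    by (rule heq_laurent_hom) (use a_eq b_eq in simp_all)
  then have "heq T z (homD T laurent_mod (p - 1) (laurent_hom (p - 1) c e))"
    using homB_laurent_mod_eq[OF z] unfolding heq_def by simp
  ultimately show "\<exists>h. homB T laurent_mod (p - 1) h \<and> heq T z (homD T laurent_mod (p - 1) h)"
    by blast
qed

text \<open>Direct sums inside \<open>nat \<Rightarrow> 'k\<close>: the summands occupy the even and the odd positions.\<close>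

definition vpair :: "(nat \<Rightarrow> 'k) \<Rightarrow> (nat \<Rightarrow> 'k) \<Rightarrow> nat \<Rightarrow> 'k" where
  "vpair u w = (\<lambda>n. if even n then u (n div 2) else w (n div 2))"

definition vfst :: "(nat \<Rightarrow> 'k) \<Rightarrow> nat \<Rightarrow> 'k" where
  "vfst v = (\<lambda>n. v (2 * n))"

definition vsnd :: "(nat \<Rightarrow> 'k) \<Rightarrow> nat \<Rightarrow> 'k" where
  "vsnd v = (\<lambda>n. v (2 * n + 1))"

lemma vfst_vpair [simp]: "vfst (vpair u w) = u"
  and vsnd_vpair [simp]: "vsnd (vpair u w) = w"
  by (simp_all add: vpair_def vfst_def vsnd_def)

lemma vpair_simps [simp]:
  fixes u w :: "nat \<Rightarrow> 'k::field"
  shows "vpair u w + vpair u' w' = vpair (u + u') (w + w')"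
    "vpair u w - vpair u' w' = vpair (u - u') (w - w')"
    "- vpair u w = vpair (- u) (- w)" "sc c (vpair u w) = vpair (sc c u) (sc c w)"
    "vpair 0 0 = 0"
  by (simp_all add: vpair_def vfst_def vsnd_def sc_def fun_eq_iff)

lemma vfst_vsnd_simps [simp]:
  fixes v w :: "nat \<Rightarrow> 'k::field"
  shows "vfst (v + w) = vfst v + vfst w" "vsnd (v + w) = vsnd v + vsnd w"
    "vfst (sc c v) = sc c (vfst v)" "vsnd (sc c v) = sc c (vsnd v)"
    "vfst 0 = 0" "vsnd 0 = 0"
  by (simp_all add: vfst_def vsnd_def sc_def fun_eq_iff)

lemma vpair_eq_iff [simp]: "vpair u w = vpair u' w' \<longleftrightarrow> u = u' \<and> w = w'"
  by (metis vfst_vpair vsnd_vpair)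

definition pair_space :: "(nat \<Rightarrow> 'k) set \<Rightarrow> (nat \<Rightarrow> 'k) set" where
  "pair_space S = {vpair u w | u w. u \<in> S \<and> w \<in> S}"

lemma vpair_mem_pair_space [simp]: "vpair u w \<in> pair_space S \<longleftrightarrow> u \<in> S \<and> w \<in> S"
  unfolding pair_space_def by auto

lemma pair_spaceE:
  assumes "v \<in> pair_space S"
  obtains u w where "v = vpair u w" "u \<in> S" "w \<in> S"
  using assms unfolding pair_space_def by blast

lemma subsp_pair_space:
  fixes S :: "(nat \<Rightarrow> 'k::field) set"
  assumes "subsp S"
  shows "subsp (pair_space S)"
  unfolding subsp_def
proof (intro conjI ballI allI)
  show "0 \<in> pair_space S"
    using vpair_mem_pair_space[of 0 0 S] subsp_zero[OF assms] by simp
qed (auto simp: subsp_add[OF assms] subsp_sc[OF assms] elim!: pair_spaceE)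

text \<open>The cone of the identity of \<open>laurent_mod\<close>, in degrees 0, 1, 2.\<close>

definition cone_mod :: "(nat, 'k::field) cdgB" where
  "cone_mod = \<lparr>car = (\<lambda>n. if n = 0 then laurent else if n = 1 then pair_space laurent
        else if n = 2 then laurent else {0}),
     eps = (\<lambda>n v. if n = 0 then vpair v 0 else if n = 1 then vsnd v else 0),
     dif = (\<lambda>n v. if n = 0 then vpair (xmul v) v else if n = 1 then xmul (vsnd v) - vfst v else 0)\<rparr>"

lemma cone_mod_simps [simp]:
  "car cone_mod n = (if n = 0 then laurent else if n = 1 then pair_space laurent
      else if n = 2 then laurent else {0})"
  "eps cone_mod n v = (if n = 0 then vpair v 0 else if n = 1 then vsnd v else 0)"
  "dif cone_mod n v = (if n = 0 then vpair (xmul v) v else if n = 1 then xmul (vsnd v) - vfst v else 0)"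
  by (simp_all add: cone_mod_def)

lemma cone_mod_cases:
  assumes "x \<in> car (cone_mod :: (nat, 'k::field) cdgB) n"
  obtains "n = 0" "x \<in> laurent"
    | u w where "n = 1" "x = vpair u w" "u \<in> laurent" "w \<in> laurent"
    | "n = 2" "x \<in> laurent"
    | "n \<noteq> 0" "n \<noteq> 1" "n \<noteq> 2" "x = 0"
proof -
  consider "n = 0" | "n = 1" | "n = 2" | "n \<noteq> 0" "n \<noteq> 1" "n \<noteq> 2" by blast
  then show ?thesis
  proof cases
    case 1
    with assms show ?thesis by (intro that(1)) simp_all
  next
    case 2
    with assms obtain u w where "x = vpair u w" "u \<in> laurent" "w \<in> laurent"
      by (auto elim: pair_spaceE)
    with 2 show ?thesis by (intro that(2))
  next
    case 3
    with assms show ?thesis by (intro that(3)) simp_all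
  next
    case 4
    with assms show ?thesis by (intro that(4)) simp_all
  qed
qed

lemma cone_mod_cdgB: "is_cdgB (cone_mod :: (nat, 'k::field) cdgB)"
  unfolding is_cdgB_def
proof (intro conjI allI ballI)
  fix n :: int
  show "subsp (car (cone_mod :: (nat, 'k) cdgB) n)"
    by (simp add: laurent_subsp subsp_pair_space subsp_def[of "{0}"])
  have "eps cone_mod n x \<in> car cone_mod (n + 1)" "dif cone_mod n x \<in> car cone_mod (n + 1)"
    if "x \<in> car (cone_mod :: (nat, 'k) cdgB) n" for x
    using that by (cases rule: cone_mod_cases; simp)+
  then show "linmap (car (cone_mod :: (nat, 'k) cdgB) n) (car cone_mod (n + 1)) (eps cone_mod n)"
    "linmap (car (cone_mod :: (nat, 'k) cdgB) n) (car cone_mod (n + 1)) (dif cone_mod n)"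
    unfolding linmap_def by (simp_all add: algebra_simps)
  fix x assume "x \<in> car (cone_mod :: (nat, 'k) cdgB) n"
  then show "eps cone_mod (n + 1) (eps cone_mod n x) = 0"
    "dif cone_mod (n + 1) (dif cone_mod n x) = 0"
    "dif cone_mod (n + 1) (eps cone_mod n x) = - eps cone_mod (n + 1) (dif cone_mod n x)"
    by (cases rule: cone_mod_cases; simp)+
qed

definition cone_proj :: "int \<Rightarrow> (nat \<Rightarrow> 'k::field) \<Rightarrow> nat \<Rightarrow> 'k" where
  "cone_proj n v = (if n = 0 then v else if n = 1 then vfst v else 0)"

definition cone_contraction :: "int \<Rightarrow> (nat \<Rightarrow> 'k::field) \<Rightarrow> nat \<Rightarrow> 'k" where
  "cone_contraction n v = (if n = 1 then vsnd v else if n = 2 then vpair (- v) 0 else 0)"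

lemma contraction_cone_mod: "contraction (cone_mod :: (nat, 'k::field) cdgB) cone_contraction"
  unfolding contraction_def
proof (intro conjI allI ballI)
  fix n :: int
  show "linmap (car (cone_mod :: (nat, 'k) cdgB) n) (car cone_mod (n - 1)) (cone_contraction n)"
    unfolding linmap_def
  proof (intro conjI ballI allI)
    fix x assume "x \<in> car (cone_mod :: (nat, 'k) cdgB) n"
    then show "cone_contraction n x \<in> car cone_mod (n - 1)"
      by (cases rule: cone_mod_cases) (simp_all add: cone_contraction_def)
  qed (simp_all add: cone_contraction_def)
  fix x assume "x \<in> car (cone_mod :: (nat, 'k) cdgB) n"
  then show "cone_contraction (n + 1) (eps cone_mod n x) = - eps cone_mod (n - 1) (cone_contraction n x)"
    "dif cone_mod (n - 1) (cone_contraction n x) + cone_contraction (n + 1) (dif cone_mod n x) = x"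
    by (cases rule: cone_mod_cases; simp add: cone_contraction_def)+
qed

lemma cone_proj_closed: "closed_morph (cone_mod :: (nat, 'k::field) cdgB) laurent_mod cone_proj"
  unfolding closed_morph_def
proof (intro conjI allI ballI)
  fix n :: int
  show "linmap (car (cone_mod :: (nat, 'k) cdgB) n) (car laurent_mod n) (cone_proj n)"
    unfolding linmap_def
  proof (intro conjI ballI allI)
    fix x assume "x \<in> car (cone_mod :: (nat, 'k) cdgB) n"
    then show "cone_proj n x \<in> car laurent_mod n"
      by (cases rule: cone_mod_cases) (simp_all add: cone_proj_def)
  qed (simp_all add: cone_proj_def)
  fix x assume "x \<in> car (cone_mod :: (nat, 'k) cdgB) n"
  then show "cone_proj (n + 1) (eps cone_mod n x) = eps laurent_mod n (cone_proj n x)"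
    "cone_proj (n + 1) (dif cone_mod n x) = dif laurent_mod n (cone_proj n x)"
    by (cases rule: cone_mod_cases; simp add: cone_proj_def)+
qed

lemma cone_proj_surj: "fibB (cone_mod :: (nat, 'k::field) cdgB) laurent_mod cone_proj"
  unfolding fibB_def
proof
  fix n :: int
  have "v \<in> cone_proj n ` car (cone_mod :: (nat, 'k) cdgB) n" if "v \<in> car laurent_mod n" for v
  proof -
    have "v = cone_proj n (if n = 1 then vpair v 0 else v)"
      and "(if n = 1 then vpair v 0 else v) \<in> car (cone_mod :: (nat, 'k) cdgB) n"
      using that by (auto simp: cone_proj_def)
    then show ?thesis by blast
  qed
  moreover have "cone_proj n ` car (cone_mod :: (nat, 'k) cdgB) n \<subseteq> car laurent_mod n"
    using linmap_mem cone_proj_closed unfolding closed_morph_def by blast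
  ultimately show "cone_proj n ` car (cone_mod :: (nat, 'k) cdgB) n = car laurent_mod n"
    by blast
qed

lemma cone_proj_weq: "weqB (cone_mod :: (nat, 'k::field) cdgB) laurent_mod cone_proj"
  unfolding weqB_def
  using homB_qiso_if_acyclic[OF cone_mod_cdgB laurent_mod_cdgB cone_proj_closed
      homB_acyclic_if_contraction[OF cone_mod_cdgB contraction_cone_mod] homB_acyclic_laurent_mod]
  by blast

definition X_to_laurent :: "int \<Rightarrow> (nat \<Rightarrow> 'k::field) \<Rightarrow> nat \<Rightarrow> 'k" where
  "X_to_laurent n = (if n = 0 \<or> n = 1 then poly_laurent else (\<lambda>_. 0))"

lemma Xmod_simps [simp]:
  "car Xmod n = (if n = 0 \<or> n = 1 then finsupp else {0})"
  "eps Xmod n v = (if n = 0 then v else 0)"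
  "dif Xmod n v = (if n = 0 then shiftx v else 0)"
  by (simp_all add: Xmod_def)

lemma X_to_laurent_closed: "closed_morph (Xmod :: (nat, 'k::field) cdgB) laurent_mod X_to_laurent"
  unfolding closed_morph_def linmap_def X_to_laurent_def
  by (auto simp: poly_laurent_mem finsupp_add finsupp_sc poly_laurent_shiftx)

lemma X_to_laurent_no_lift:
  "\<not> (\<exists>g. closed_morph (Xmod :: (nat, 'k::field) cdgB) cone_mod g \<and>
      (\<forall>n. \<forall>x\<in>car Xmod n. cone_proj n (g n x) = X_to_laurent n x))"
proof
  assume "\<exists>g. closed_morph (Xmod :: (nat, 'k) cdgB) cone_mod g \<and>
      (\<forall>n. \<forall>x\<in>car Xmod n. cone_proj n (g n x) = X_to_laurent n x)"
  then obtain g where g: "closed_morph (Xmod :: (nat, 'k) cdgB) cone_mod g"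
    and lift: "\<forall>n. \<forall>x\<in>car Xmod n. cone_proj n (g n x) = X_to_laurent n x"
    by blast
  define one :: "nat \<Rightarrow> 'k" where "one = (\<lambda>j. if j = 0 then 1 else 0)"
  have one: "one \<in> finsupp" "shiftx one \<in> finsupp"
    unfolding finsupp_def one_def shiftx_def by simp_all
  have g0: "g 0 q = poly_laurent q" if "q \<in> finsupp" for q
    using bspec[OF lift[THEN spec, of 0]] that by (simp add: cone_proj_def X_to_laurent_def)
  have g_eps: "g (n + 1) (eps Xmod n q) = eps cone_mod n (g n q)"
    and g_dif: "g (n + 1) (dif Xmod n q) = dif cone_mod n (g n q)" if "q \<in> car Xmod n" for n q
    using g that unfolding closed_morph_def by blast+
  have "g 1 (shiftx one) = vpair (xmul (poly_laurent one)) (poly_laurent one)"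
    using g_dif[where n = 0 and q = one] one(1) g0[OF one(1)] by simp
  moreover have "g 1 (shiftx one) = vpair (poly_laurent (shiftx one)) 0"
    using g_eps[where n = 0 and q = "shiftx one"] one(2) g0[OF one(2)] by simp
  ultimately have "poly_laurent one = 0" by simp
  then have "lcoeff (poly_laurent one) 0 = 0" by simp
  then show False by (simp add: lcoeff_poly_laurent one_def)
qed

theorem mainTheorem19:
  assumes "alg_closed TYPE('k::field)"
  shows "\<not> cofibrantB (Xmod :: (nat, 'k) cdgB)"
proof
  assume "cofibrantB (Xmod :: (nat, 'k) cdgB)"
  then have "\<exists>g. closed_morph (Xmod :: (nat, 'k) cdgB) cone_mod g \<and>
      (\<forall>n. \<forall>x\<in>car Xmod n. cone_proj n (g n x) = X_to_laurent n x)"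
    unfolding cofibrantB_def
    using cone_mod_cdgB laurent_mod_cdgB cone_proj_closed cone_proj_surj cone_proj_weq
      X_to_laurent_closed
    by blast
  with X_to_laurent_no_lift show False by blast
qed

end
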